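(* Let $d\ge2$, $n\ge1$, $d\le t\le dn$, let $\gamma$ be a positive conductivity on the lattice graph below, fix $p\in L_t$, and let $M_p=\mathcal N(p)\cap(J_{t-1}^{\mathcal S}\cup L_{t-1}^{\mathcal S})$. Suppose $\mathbf u\in\mathbb R^{L_t^{\mathcal S}\cup J_{t-1}^{\mathcal S}}$ satisfies $\mathbf u_p=0$, $\sum_{q\in\mathcal N(r)}\gamma_{rq}(\mathbf u_q-\mathbf u_r)=0$ for all $r\in L_{t-1}^{\mathcal S}\setminus M_p$, $\mathbf u=0$ on $J_{t-1}^{\mathcal S}$, and $\gamma_{bq_b}(\mathbf u_{q_b}-\mathbf u_b)=0$ for all $b\in J_{t-1}^{\mathcal S}$. Then $\mathbf u=0$.
   Context: Lattice: $D=\{x\in\mathbb Z^d:1\le x_i\le n\ \forall i\}$, $\partial D=\{p\in\mathbb Z^d:\min_{q\in D}\|q-p\|_{\ell^1}=1\}$; $E$ = unordered pairs $pq\subseteq D\cup\partial D$ with $\|p-q\|_{\ell^1}=1$, not both in $\partial D$; $\mathcal N(p)=\{q:pq\in E\}$; each $b\in\partial D$ has a unique neighbour $q_b\in D$. Conductivity $\gamma:E\to(0,\infty)$, symmetric. With $s(x)=\sum_ix_i$: $L_t=\{x\in D:s(x)=t\}$, $L_t^{\mathcal S}=\{x\in D:s(x)\le t\}$, $K_t^+=\{x\in\partial D:s(x)=t,\max_ix_i=n+1\}$, $K_t^-=\{x\in\partial D:s(x)=t,\min_ix_i=0\}$, $K_t^{\mathcal S\pm}=\bigcup_{\ell\le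 t}K_\ell^\pm$, $J_t^{\mathcal S}=K_t^{\mathcal S-}\cup K_{t+1}^{\mathcal S+}$. *)

theory Defs
  imports Complex_Main
begin

text \<open>Lattice points of Z^d are functions 'd \<Rightarrow> int over a finite index type 'd, d = CARD('d).\<close>

definition l1 :: "('d::finite \<Rightarrow> int) \<Rightarrow> ('d \<Rightarrow> int) \<Rightarrow> int" where
  "l1 p q = (\<Sum>i\<in>UNIV. \<bar>p i - q i\<bar>)"

definition ssum :: "('d::finite \<Rightarrow> int) \<Rightarrow> int" where
  "ssum x = (\<Sum>i\<in>UNIV. x i)"

definition Dom :: "nat \<Rightarrow> ('d::finite \<Rightarrow> int) set" where
  "Dom n = {x. \<forall>i. 1 \<le> x i \<and> x i \<le> int n}"

definition bdry :: "nat \<Rightarrow> ('d::finite \<Rightarrow> int) set" where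
  "bdry n = {p. Min ((\<lambda>q. l1 q p) ` Dom n) = 1}"

definition edge :: "nat \<Rightarrow> ('d::finite \<Rightarrow> int) \<Rightarrow> ('d \<Rightarrow> int) \<Rightarrow> bool" where
  "edge n p q \<longleftrightarrow> p \<in> Dom n \<union> bdry n \<and> q \<in> Dom n \<union> bdry n \<and> l1 p q = 1
      \<and> \<not> (p \<in> bdry n \<and> q \<in> bdry n)"

definition nbhd :: "nat \<Rightarrow> ('d::finite \<Rightarrow> int) \<Rightarrow> ('d \<Rightarrow> int) set" where
  "nbhd n p = {q. edge n p q}"

definition qb :: "nat \<Rightarrow> ('d::finite \<Rightarrow> int) \<Rightarrow> ('d \<Rightarrow> int)" where
  "qb n b = (THE q. q \<in> Dom n \<and> edge n b q)"

definition Lt :: "nat \<Rightarrow> int \<Rightarrow> ('d::finite \<Rightarrow> int) set" where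
  "Lt n t = {x \<in> Dom n. ssum x = t}"

definition LS :: "nat \<Rightarrow> int \<Rightarrow> ('d::finite \<Rightarrow> int) set" where
  "LS n t = {x \<in> Dom n. ssum x \<le> t}"

definition Kplus :: "nat \<Rightarrow> int \<Rightarrow> ('d::finite \<Rightarrow> int) set" where
  "Kplus n t = {x \<in> bdry n. ssum x = t \<and> Max (range x) = int n + 1}"

definition Kminus :: "nat \<Rightarrow> int \<Rightarrow> ('d::finite \<Rightarrow> int) set" where
  "Kminus n t = {x \<in> bdry n. ssum x = t \<and> Min (range x) = 0}"

definition KSplus :: "nat \<Rightarrow> int \<Rightarrow> ('d::finite \<Rightarrow> int) set" where
  "KSplus n t = (\<Union>l\<in>{..t}. Kplus n l)"

definition KSminus :: "nat \<Rightarrow> int \<Rightarrow> ('d::finite \<Rightarrow> int) set" where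
  "KSminus n t = (\<Union>l\<in>{..t}. Kminus n l)"

definition JS :: "nat \<Rightarrow> int \<Rightarrow> ('d::finite \<Rightarrow> int) set" where
  "JS n t = KSminus n t \<union> KSplus n (t + 1)"

definition conductivity :: "nat \<Rightarrow> (('d::finite \<Rightarrow> int) \<Rightarrow> ('d \<Rightarrow> int) \<Rightarrow> real) \<Rightarrow> bool" where
  "conductivity n \<gamma> \<longleftrightarrow> (\<forall>p q. edge n p q \<longrightarrow> \<gamma> p q > 0 \<and> \<gamma> p q = \<gamma> q p)"

end

theory Submission
  imports Defs "HOL-Library.FuncSet"
begin

text \<open>
  The values of u are shown to vanish layer by layer in the coordinate sum s, and inside a
  layer by induction on a single coordinate x j. If x j = 1, the point b = x - e_j lies in
  K^- and its no-flux condition forces u x = u b = 0. Otherwise u is harmonic at the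
  interior point r = x - e_j one layer down, and every neighbour of r other than x is either
  in a lower layer, on the boundary part J, or in the layer of x with a smaller j-th coordinate;
  harmonicity at r then reduces to \<gamma> r x * u x = 0. Harmonicity is not assumed at the
  neighbours of p, and in the top layer these are avoided by transporting along a second
  coordinate for the points x with x j1 > p j1.
\<close>

lemma l1_self [simp]: "l1 p p = 0"
  unfolding l1_def by simp

lemma l1_commute: "l1 p q = l1 q p"
  unfolding l1_def by (simp add: abs_minus_commute)

lemma l1_eq_0_iff: "l1 p q = 0 \<longleftrightarrow> p = q"
  unfolding l1_def by (subst sum_nonneg_eq_0_iff) (auto intro!: ext)

lemma l1_nonneg: "0 \<le> l1 p q"
  unfolding l1_def by simp

lemma l1_split: "l1 p q = \<bar>p i - q i\<bar> + (\<Sum>k\<in>UNIV - {i}. \<bar>p k - q k\<bar>)"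
  unfolding l1_def by (simp add: sum.remove)

lemma ssum_fun_upd: "ssum (r(i := v)) = ssum r - r i + v"
  unfolding ssum_def by (simp add: sum.remove[of UNIV i] sum.cong[of "UNIV - {i}" _ "r(i := v)" r])

lemma ssum_move: "i \<noteq> j \<Longrightarrow> ssum (y(j := y j - 1, i := y i + 1)) = ssum y"
  by (simp add: ssum_fun_upd)

lemma l1_fun_upd_self: "l1 r (r(i := r i + c)) = \<bar>c\<bar>"
  using l1_split[of r "r(i := r i + c)" i] by simp

lemma l1_eq_1_iff: "l1 r q = 1 \<longleftrightarrow> (\<exists>i. q = r(i := r i + 1) \<or> q = r(i := r i - 1))"
proof
  assume l1: "l1 r q = 1"
  then have "r \<noteq> q"
    by auto
  then obtain i where "r i \<noteq> q i"
    by auto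
  moreover have "0 \<le> (\<Sum>k\<in>UNIV - {i}. \<bar>r k - q k\<bar>)"
    by simp
  ultimately have "\<bar>r i - q i\<bar> = 1" and rest: "(\<Sum>k\<in>UNIV - {i}. \<bar>r k - q k\<bar>) = 0"
    using l1 l1_split[of r q i] by linarith+
  moreover have "q k = r k" if "k \<noteq> i" for k
    using rest that by (subst (asm) sum_nonneg_eq_0_iff) auto
  ultimately have "q = r(i := r i + 1) \<or> q = r(i := r i - 1)"
    by (auto simp: abs_if split: if_splits intro!: ext)
  then show "\<exists>i. q = r(i := r i + 1) \<or> q = r(i := r i - 1)" ..
next
  assume "\<exists>i. q = r(i := r i + 1) \<or> q = r(i := r i - 1)"
  then show "l1 r q = 1"
    using l1_fun_upd_self[of r _ 1] l1_fun_upd_self[of r _ "-1"] by auto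
qed

lemma finite_Dom: "finite (Dom n :: ('d::finite \<Rightarrow> int) set)"
proof -
  have "Dom n \<subseteq> Pi\<^sub>E (UNIV :: 'd set) (\<lambda>_. {1..int n})"
    unfolding Dom_def by (auto simp: PiE_def extensional_def)
  then show ?thesis
    by (rule finite_subset) (simp add: finite_PiE)
qed

lemma mem_bdry_iff:
  fixes b :: "'d::finite \<Rightarrow> int"
  assumes "1 \<le> n"
  shows "b \<in> bdry n \<longleftrightarrow> b \<notin> Dom n \<and> (\<exists>q\<in>Dom n. l1 q b = 1)"
proof -
  let ?A = "(\<lambda>q. l1 q b) ` Dom n"
  have fin: "finite ?A"
    by (simp add: finite_Dom)
  have "(\<lambda>_. 1) \<in> Dom n"
    using assms by (simp add: Dom_def)
  then have ne: "?A \<noteq> {}"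
    by blast
  show ?thesis
  proof
    assume "b \<in> bdry n"
    then have min: "Min ?A = 1"
      by (simp add: bdry_def)
    then obtain q where "q \<in> Dom n" "l1 q b = 1"
      using Min_in[OF fin ne] by auto
    moreover have "b \<notin> Dom n"
    proof
      assume "b \<in> Dom n"
      then have "Min ?A \<le> l1 b b"
        by (intro Min_le[OF fin] imageI)
      then show False
        using min by simp
    qed
    ultimately show "b \<notin> Dom n \<and> (\<exists>q\<in>Dom n. l1 q b = 1)"
      by blast
  next
    assume b: "b \<notin> Dom n \<and> (\<exists>q\<in>Dom n. l1 q b = 1)"
    have "1 \<le> l1 q b" if "q \<in> Dom n" for q
      using b that l1_nonneg[of q b] l1_eq_0_iff[of q b] by fastforce
    then have "Min ?A = 1"
      using b by (intro Min_eqI[OF fin]) force+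
    then show "b \<in> bdry n"
      by (simp add: bdry_def)
  qed
qed

lemma edge_commute: "edge n p q \<longleftrightarrow> edge n q p"
  unfolding edge_def by (auto simp: l1_commute)

lemma edge_Dom_iff:
  assumes "1 \<le> n" and "r \<in> Dom n"
  shows "edge n r q \<longleftrightarrow> l1 r q = 1"
  using assms mem_bdry_iff[OF assms(1), of r] mem_bdry_iff[OF assms(1), of q]
  by (auto simp: edge_def l1_commute)

lemma nbhd_Dom:
  assumes "1 \<le> n" and "r \<in> Dom n"
  shows "nbhd n r = range (\<lambda>i. r(i := r i + 1)) \<union> range (\<lambda>i. r(i := r i - 1))"
  using edge_Dom_iff[OF assms] by (auto simp: nbhd_def l1_eq_1_iff)

lemma finite_nbhd_Dom: "1 \<le> n \<Longrightarrow> r \<in> Dom n \<Longrightarrow> finite (nbhd n r)"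
  by (simp add: nbhd_Dom)

lemma fun_upd_incr_in_Kplus:
  assumes "1 \<le> n" and r: "r \<in> Dom n" and out: "r(i := r i + 1) \<notin> Dom n"
  shows "r(i := r i + 1) \<in> Kplus n (ssum r + 1)"
proof -
  let ?q = "r(i := r i + 1)"
  have "?q \<in> bdry n"
    using mem_bdry_iff[OF assms(1)] r out l1_fun_upd_self[of r i 1] by auto
  moreover have "r i = int n"
    using r out unfolding Dom_def by (smt (verit) fun_upd_apply mem_Collect_eq)
  then have "Max (range ?q) = int n + 1"
    using r by (intro Max_eqI) (auto simp: Dom_def intro: order_trans)
  ultimately show ?thesis
    by (simp add: Kplus_def ssum_fun_upd)
qed

lemma fun_upd_decr_in_Kminus:
  assumes "1 \<le> n" and r: "r \<in> Dom n" and out: "r(i := r i - 1) \<notin> Dom n"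
  shows "r(i := r i - 1) \<in> Kminus n (ssum r - 1)"
proof -
  let ?q = "r(i := r i - 1)"
  have "?q \<in> bdry n"
    using mem_bdry_iff[OF assms(1)] r out l1_fun_upd_self[of r i "-1"] by auto
  moreover have "r i = 1"
    using r out unfolding Dom_def by (smt (verit) fun_upd_apply mem_Collect_eq)
  then have "Min (range ?q) = 0"
    using r by (intro Min_eqI) (auto simp: Dom_def intro: order_trans[OF zero_le_one])
  ultimately show ?thesis
    by (simp add: Kminus_def ssum_fun_upd)
qed

lemma Kplus_subset_JS: "l \<le> s + 1 \<Longrightarrow> Kplus n l \<subseteq> JS n s"
  by (auto simp: JS_def KSplus_def)

lemma Kminus_subset_JS: "l \<le> s \<Longrightarrow> Kminus n l \<subseteq> JS n s"
  by (auto simp: JS_def KSminus_def)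

lemma qb_fun_upd_face:
  assumes "1 \<le> n" and x: "x \<in> Dom n" and "x i = 1"
  shows "edge n (x(i := 0)) x" and "qb n (x(i := 0)) = x"
proof -
  let ?b = "x(i := 0)"
  have b: "?b = x(i := x i - 1)"
    using \<open>x i = 1\<close> by simp
  have "edge n x ?b"
    using edge_Dom_iff[OF assms(1,2)] l1_fun_upd_self[of x i "-1"] by (simp add: b)
  then show edge: "edge n ?b x"
    using edge_commute by blast
  have "q = x" if q: "q \<in> Dom n" "edge n ?b q" for q
  proof -
    have "1 \<le> q i"
      using q by (simp add: Dom_def)
    moreover have "l1 ?b q = 1"
      using q(2) by (simp add: edge_def)
    then obtain k where "q = ?b(k := ?b k + 1) \<or> q = ?b(k := ?b k - 1)"
      unfolding l1_eq_1_iff by blast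
    ultimately show "q = x"
      using \<open>x i = 1\<close> by (cases "k = i") (auto intro!: ext)
  qed
  then show "qb n ?b = x"
    unfolding qb_def using x edge by blast
qed

lemma fun_upd_decr_in_Dom: "x \<in> Dom n \<Longrightarrow> 2 \<le> x j \<Longrightarrow> x(j := x j - 1) \<in> Dom n"
  unfolding Dom_def by (smt (verit) fun_upd_apply mem_Collect_eq)

lemma ssum_Dom_nonneg: "x \<in> Dom n \<Longrightarrow> 0 \<le> ssum x"
  unfolding Dom_def ssum_def by (auto intro!: sum_nonneg intro: order_trans[OF zero_le_one])

locale layer_stripping =
  fixes n :: nat and t :: int and \<gamma> :: "('d::finite \<Rightarrow> int) \<Rightarrow> ('d \<Rightarrow> int) \<Rightarrow> real"
    and p :: "'d \<Rightarrow> int" and u :: "('d \<Rightarrow> int) \<Rightarrow> real"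
  assumes n_pos: "1 \<le> n"
    and conductivity: "conductivity n \<gamma>"
    and p_top: "p \<in> Lt n t"
    and u_p: "u p = 0"
    and harmonic: "\<And>r. r \<in> Dom n \<Longrightarrow> ssum r \<le> t - 1 \<Longrightarrow> r \<notin> nbhd n p \<Longrightarrow>
                    (\<Sum>q\<in>nbhd n r. \<gamma> r q * (u q - u r)) = 0"
    and u_JS: "\<And>b. b \<in> JS n (t - 1) \<Longrightarrow> u b = 0"
    and no_flux: "\<And>b. b \<in> JS n (t - 1) \<Longrightarrow> \<gamma> b (qb n b) * (u (qb n b) - u b) = 0"
begin

lemma conductivity_pos: "edge n a b \<Longrightarrow> 0 < \<gamma> a b"
  using conductivity by (simp add: conductivity_def)

lemma vanish_on_face:
  assumes x: "x \<in> Dom n" "ssum x \<le> t" and "x i = 1"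
  shows "u x = 0"
proof -
  let ?b = "x(i := 0)"
  have "?b = x(i := x i - 1)" and "?b \<notin> Dom n"
    using \<open>x i = 1\<close> by (auto simp: Dom_def)
  then have b: "?b \<in> JS n (t - 1)"
    using fun_upd_decr_in_Kminus[OF n_pos x(1), of i] Kminus_subset_JS[of "ssum x - 1" "t - 1" n] x(2)
    by auto
  have "0 < \<gamma> ?b x"
    using conductivity_pos qb_fun_upd_face(1)[OF n_pos x(1) \<open>x i = 1\<close>] .
  then show ?thesis
    using no_flux[OF b] u_JS[OF b] qb_fun_upd_face(2)[OF n_pos x(1) \<open>x i = 1\<close>] by simp
qed

lemma vanish_near_predecessor:
  assumes x: "x \<in> Dom n" "ssum x \<le> t" "2 \<le> x j"
    and below: "\<And>y. y \<in> Dom n \<Longrightarrow> ssum y < ssum x \<Longrightarrow> u y = 0"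
    and sideways: "\<And>i. i \<noteq> j \<Longrightarrow> x(j := x j - 1, i := x i + 1) \<in> Dom n \<Longrightarrow>
                    u (x(j := x j - 1, i := x i + 1)) = 0"
    and q: "q \<in> nbhd n (x(j := x j - 1))" "q \<noteq> x"
  shows "u q = 0"
proof -
  define r where "r = x(j := x j - 1)"
  have r: "r \<in> Dom n" "ssum r = ssum x - 1"
    using fun_upd_decr_in_Dom[OF x(1,3)] by (simp_all add: r_def ssum_fun_upd)
  obtain i where "q = r(i := r i + 1) \<or> q = r(i := r i - 1)"
    using q nbhd_Dom[OF n_pos r(1)] by (auto simp: r_def)
  then show ?thesis
  proof
    assume q_up: "q = r(i := r i + 1)"
    then have "i \<noteq> j" and q_eq: "q = x(j := x j - 1, i := x i + 1)"
      using q(2) by (auto simp: r_def)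
    show ?thesis
    proof (cases "q \<in> Dom n")
      case True
      then show ?thesis
        using sideways \<open>i \<noteq> j\<close> q_eq by simp
    next
      case False
      then have "q \<in> Kplus n (ssum x)"
        using fun_upd_incr_in_Kplus[OF n_pos r(1), of i] q_up r(2) by simp
      then show ?thesis
        using Kplus_subset_JS[of "ssum x" "t - 1" n] x(2) u_JS by auto
    qed
  next
    assume q_down: "q = r(i := r i - 1)"
    then have "ssum q = ssum x - 2"
      using r(2) by (simp add: ssum_fun_upd)
    show ?thesis
    proof (cases "q \<in> Dom n")
      case True
      then show ?thesis
        using below \<open>ssum q = ssum x - 2\<close> by simp
    next
      case False
      then have "q \<in> Kminus n (ssum x - 2)"
        using fun_upd_decr_in_Kminus[OF n_pos r(1), of i] q_down r(2) by simp
      then show ?thesis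
        using Kminus_subset_JS[of "ssum x - 2" "t - 1" n] x(2) u_JS by auto
    qed
  qed
qed

lemma vanish_by_transport:
  assumes x: "x \<in> Dom n" "ssum x \<le> t" "2 \<le> x j"
    and not_nbhd: "x(j := x j - 1) \<notin> nbhd n p"
    and below: "\<And>y. y \<in> Dom n \<Longrightarrow> ssum y < ssum x \<Longrightarrow> u y = 0"
    and sideways: "\<And>i. i \<noteq> j \<Longrightarrow> x(j := x j - 1, i := x i + 1) \<in> Dom n \<Longrightarrow>
                    u (x(j := x j - 1, i := x i + 1)) = 0"
  shows "u x = 0"
proof -
  define r where "r = x(j := x j - 1)"
  have r: "r \<in> Dom n" "ssum r = ssum x - 1"
    using fun_upd_decr_in_Dom[OF x(1,3)] by (simp_all add: r_def ssum_fun_upd)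
  have x_nbhd: "x \<in> nbhd n r"
    using nbhd_Dom[OF n_pos r(1)] by (auto simp: r_def intro!: range_eqI[of _ _ j])
  have "u r = 0"
    using below r by simp
  moreover have "u q = 0" if "q \<in> nbhd n r - {x}" for q
    using vanish_near_predecessor[OF x below sideways] that by (simp add: r_def)
  ultimately have "(\<Sum>q\<in>nbhd n r. \<gamma> r q * (u q - u r)) = \<gamma> r x * u x"
    by (simp add: sum.remove[OF finite_nbhd_Dom[OF n_pos r(1)] x_nbhd])
  moreover have "(\<Sum>q\<in>nbhd n r. \<gamma> r q * (u q - u r)) = 0"
    using harmonic r x(2) not_nbhd by (simp add: r_def)
  moreover have "0 < \<gamma> r x"
    using conductivity_pos x_nbhd by (simp add: nbhd_def)
  ultimately show ?thesis
    by simp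
qed

lemma vanish_along_direction:
  assumes "k \<le> t"
    and below: "\<And>y. y \<in> Dom n \<Longrightarrow> ssum y < k \<Longrightarrow> u y = 0"
    and S_layer: "S \<subseteq> Lt n k"
    and admissible: "\<And>x. x \<in> S \<Longrightarrow> x \<noteq> p \<Longrightarrow> x(j := x j - 1) \<notin> nbhd n p"
    and closed: "\<And>x i. x \<in> S \<Longrightarrow> i \<noteq> j \<Longrightarrow> x(j := x j - 1, i := x i + 1) \<in> Dom n \<Longrightarrow>
                  x(j := x j - 1, i := x i + 1) \<in> S"
    and "x \<in> S"
  shows "u x = 0"
  using \<open>x \<in> S\<close>
proof (induction "nat (x j)" arbitrary: x rule: less_induct)
  case less
  then have x: "x \<in> Dom n" "ssum x = k"
    using S_layer by (auto simp: Lt_def)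
  then have "1 \<le> x j"
    by (simp add: Dom_def)
  then consider "x = p" | "x j = 1" | "x \<noteq> p" "2 \<le> x j"
    by linarith
  then show ?case
  proof cases
    case 1
    then show ?thesis
      using u_p by simp
  next
    case 2
    then show ?thesis
      using vanish_on_face x \<open>k \<le> t\<close> by simp
  next
    case 3
    have "u (x(j := x j - 1, i := x i + 1)) = 0"
      if "i \<noteq> j" "x(j := x j - 1, i := x i + 1) \<in> Dom n" for i
      using less.hyps[of "x(j := x j - 1, i := x i + 1)"] closed[OF less.prems that] that(1) 3(2)
      by simp
    then show ?thesis
      using vanish_by_transport[OF x(1) _ 3(2) admissible[OF less.prems 3(1)]] x(2) \<open>k \<le> t\<close> below
      by simp
  qed
qed

lemma predecessor_in_nbhd_p:
  assumes "y \<in> Lt n k" "k \<le> t" and "y(j := y j - 1) \<in> nbhd n p"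
  obtains i where "k = t" and "y(j := y j - 1) = p(i := p i - 1)"
proof -
  have p: "p \<in> Dom n" "ssum p = t"
    using p_top by (auto simp: Lt_def)
  have pred: "ssum (y(j := y j - 1)) = k - 1"
    using assms(1) by (simp add: Lt_def ssum_fun_upd)
  obtain i where "y(j := y j - 1) = p(i := p i + 1) \<or> y(j := y j - 1) = p(i := p i - 1)"
    using assms(3) nbhd_Dom[OF n_pos p(1)] by auto
  then show ?thesis
  proof
    assume "y(j := y j - 1) = p(i := p i + 1)"
    then have "k - 1 = t + 1"
      using pred p(2) by (simp add: ssum_fun_upd)
    then show ?thesis
      using assms(2) by simp
  next
    assume down: "y(j := y j - 1) = p(i := p i - 1)"
    then have "k - 1 = t - 1"
      using pred p(2) by (simp add: ssum_fun_upd)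
    then show ?thesis
      using that down by simp
  qed
qed

lemma vanish_on_lower_layer:
  assumes "k < t"
    and below: "\<And>y. y \<in> Dom n \<Longrightarrow> ssum y < k \<Longrightarrow> u y = 0"
    and "x \<in> Lt n k"
  shows "u x = 0"
proof -
  obtain j :: 'd where True
    by simp
  have "y(j := y j - 1) \<notin> nbhd n p" if "y \<in> Lt n k" for y
    using predecessor_in_nbhd_p[OF that] \<open>k < t\<close> by (metis less_le)
  moreover have "y(j := y j - 1, i := y i + 1) \<in> Lt n k"
    if "y \<in> Lt n k" "i \<noteq> j" "y(j := y j - 1, i := y i + 1) \<in> Dom n" for y i
    using that by (simp add: Lt_def ssum_move)
  ultimately show ?thesis
    using vanish_along_direction[where k = k and S = "Lt n k" and j = j, OF _ below]
      \<open>x \<in> Lt n k\<close> \<open>k < t\<close>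
    by auto
qed

lemma vanish_on_top_layer:
  fixes j1 j2 :: 'd
  assumes "j1 \<noteq> j2"
    and below: "\<And>y. y \<in> Dom n \<Longrightarrow> ssum y < t \<Longrightarrow> u y = 0"
    and "x \<in> Lt n t"
  shows "u x = 0"
proof (cases "x j1 \<le> p j1")
  \<comment> \<open>Lowering coordinate j1 of x lands next to p only if x = p + e_j1 - e_i,
    which has x j1 > p j1.\<close>
  case True
  let ?S = "{y \<in> Lt n t. y j1 \<le> p j1}"
  have "y(j1 := y j1 - 1) \<notin> nbhd n p" if y: "y \<in> ?S" "y \<noteq> p" for y
  proof
    assume "y(j1 := y j1 - 1) \<in> nbhd n p"
    then obtain i where eq: "y(j1 := y j1 - 1) = p(i := p i - 1)"
      using predecessor_in_nbhd_p y(1) by blast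
    show False
    proof (cases "i = j1")
      case True
      have "y l = p l" for l
        using fun_cong[OF eq, of l] True by (cases "l = j1") auto
      then show False
        using y(2) by auto
    next
      case False
      then show False
        using fun_cong[OF eq, of j1] y(1) by simp
    qed
  qed
  moreover have "y(j1 := y j1 - 1, i := y i + 1) \<in> ?S"
    if "y \<in> ?S" "i \<noteq> j1" "y(j1 := y j1 - 1, i := y i + 1) \<in> Dom n" for y i
    using that by (simp add: Lt_def ssum_move)
  ultimately show ?thesis
    using vanish_along_direction[where k = t and S = ?S and j = j1, OF _ below] True \<open>x \<in> Lt n t\<close>
    by auto
next
  case False
  let ?S = "{y \<in> Lt n t. p j1 < y j1}"
  have "y(j2 := y j2 - 1) \<notin> nbhd n p" if y: "y \<in> ?S" for y
  proof
    assume "y(j2 := y j2 - 1) \<in> nbhd n p"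
    then obtain i where eq: "y(j2 := y j2 - 1) = p(i := p i - 1)"
      using predecessor_in_nbhd_p y by blast
    have "y j1 = (p(i := p i - 1)) j1"
      using fun_cong[OF eq, of j1] \<open>j1 \<noteq> j2\<close> by simp
    then show False
      using y by (cases "i = j1") auto
  qed
  moreover have "y(j2 := y j2 - 1, i := y i + 1) \<in> ?S"
    if "y \<in> ?S" "i \<noteq> j2" "y(j2 := y j2 - 1, i := y i + 1) \<in> Dom n" for y i
    using that \<open>j1 \<noteq> j2\<close> by (auto simp: Lt_def ssum_move)
  ultimately show ?thesis
    using vanish_along_direction[where k = t and S = ?S and j = j2, OF _ below] False \<open>x \<in> Lt n t\<close>
    by auto
qed

lemma vanish_up_to_top_layer:
  fixes j1 j2 :: 'd
  assumes "j1 \<noteq> j2" and "x \<in> LS n t"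
  shows "u x = 0"
  using \<open>x \<in> LS n t\<close>
proof (induction "nat (ssum x)" arbitrary: x rule: less_induct)
  case less
  then have x: "x \<in> Lt n (ssum x)" "ssum x \<le> t"
    by (auto simp: LS_def Lt_def)
  have below: "u y = 0" if "y \<in> Dom n" "ssum y < ssum x" for y
    using less.hyps[of y] that ssum_Dom_nonneg[of y n] x(2) by (simp add: LS_def)
  show ?case
  proof (cases "ssum x < t")
    case True
    then show ?thesis
      using vanish_on_lower_layer[OF _ below x(1)] by simp
  next
    case False
    then show ?thesis
      using vanish_on_top_layer[OF \<open>j1 \<noteq> j2\<close>, of x] below x by simp
  qed
qed

end

theorem lemma3p4:
  fixes n :: nat and t :: int and \<gamma> :: "('d::finite \<Rightarrow> int) \<Rightarrow> ('d \<Rightarrow> int) \<Rightarrow> real"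
    and p :: "'d \<Rightarrow> int" and u :: "('d \<Rightarrow> int) \<Rightarrow> real"
  assumes "card (UNIV :: 'd set) \<ge> 2" and "n \<ge> 1"
    and "int (card (UNIV :: 'd set)) \<le> t" and "t \<le> int (card (UNIV :: 'd set)) * int n"
    and "conductivity n \<gamma>"
    and "p \<in> Lt n t"
    and "u p = 0"
    and "\<And>r. r \<in> LS n (t - 1) - (nbhd n p \<inter> (JS n (t - 1) \<union> LS n (t - 1))) \<Longrightarrow>
           (\<Sum>q\<in>nbhd n r. \<gamma> r q * (u q - u r)) = 0"
    and "\<And>b. b \<in> JS n (t - 1) \<Longrightarrow> u b = 0"
    and "\<And>b. b \<in> JS n (t - 1) \<Longrightarrow> \<gamma> b (qb n b) * (u (qb n b) - u b) = 0"
  shows "\<forall>x \<in> LS n t \<union> JS n (t - 1). u x = 0"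
proof -
  interpret layer_stripping n t \<gamma> p u
    using assms by unfold_locales (auto simp: LS_def)
  obtain j1 j2 :: 'd where "j1 \<noteq> j2"
    using assms(1) by (metis card_le_Suc0_iff_eq finite_UNIV not_less_eq_eq numeral_2_eq_2 One_nat_def)
  then show ?thesis
    using vanish_up_to_top_layer u_JS by blast
qed

end
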